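(* Let $1\le f\le\lfloor n/2\rfloor$ and $J_0=(n-2f+1,n-2f+2,\dots,n)$. (1) For every $d\in\mathcal D_f$ there exists $w\in\mathfrak S_n$ with $d_0=dw$ and $\ell(d_0)=\ell(d)+\ell(w)$. (2) For every $J\in\mathcal P_f$ there exists $w'\in\mathfrak S_n$ with $d_{J_0}=d_Jw'$ and $\ell(d_{J_0})=\ell(d_J)+\ell(w')$. (3) For every $d\in\mathcal D_{\nu_f}$ with $d\ne d_0d_{J_0}$ there exists $1\le j\le n-1$ such that $ds_j\in\mathcal D_{\nu_f}$ and $\ell(ds_j)=\ell(d)+1$.
   Context: $\mathfrak S_n$ acts on $\{1,\dots,n\}$ on the right: $(a)(\sigma\tau)=((a)\sigma)\tau$; $s_j=(j,j+1)$, $\ell$ is the Coxeter length. Let $\nu_f=((2^f),(n-2f))$ and $\mathfrak t^{\nu_f}$ the bitableau with $1,\dots,n$ entered in order along the rows of the first component (shape $(2^f)$) and then along the single row of the second component; $\mathfrak t^{\nu_f}d$ replaces each entry $a$ by $(a)d$. $\mathcal D_{\nu_f}$ is the set of $d\in\mathfrak S_n$ such that $\mathfrak t^{\nu_f}d$ is row standard and the first column of its first component increases from top to bottom; $\mathcal D_f=\mathcal D_{\nu_f}\cap\mathfrak S_{2f}$. $d_0\in\mathfrak S_{2f}$ is defined by $(a)d_0=(a+1)/2$ for odd $a\in\{1,\dots,2f-1\}$ and $(a)d_0=2f+1-a/2$ for even $a\in\{2,\dots,2f\}$. $\mathcal P_f=\{(i_1,\dots,i_{2f}):1\le i_1<\dots<i_{2f}\le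 n\}$, and for $J\in\mathcal P_f$, $d_J$ is the unique element of $\mathcal D_{\nu_f}$ such that the first component of $\mathfrak t^{\nu_f}d_J$ is the tableau obtained by inserting the entries of $J$ in increasing order along successive rows of the shape $(2^f)$. *)

theory Defs
  imports "HOL-Combinatorics.Combinatorics"
begin

text \<open>Permutations of {1..n} as functions nat => nat fixing everything outside {1..n}.
  Right action: (a)sigma = sigma a, and the product sigma tau acts as "first sigma, then tau".\<close>

definition Sym :: "nat \<Rightarrow> (nat \<Rightarrow> nat) set" where
  "Sym n = {\<sigma>. \<sigma> permutes {1..n}}"

definition pmult :: "(nat \<Rightarrow> nat) \<Rightarrow> (nat \<Rightarrow> nat) \<Rightarrow> (nat \<Rightarrow> nat)" where
  "pmult \<sigma> \<tau> = \<tau> \<circ> \<sigma>"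

definition sj :: "nat \<Rightarrow> nat \<Rightarrow> nat" where
  "sj j = Transposition.transpose j (Suc j)"

definition word_prod :: "nat list \<Rightarrow> nat \<Rightarrow> nat" where
  "word_prod js = foldr (\<lambda>j acc. pmult (sj j) acc) js id"

definition clen :: "nat \<Rightarrow> (nat \<Rightarrow> nat) \<Rightarrow> nat" where
  "clen n \<sigma> = (LEAST k. \<exists>js. length js = k \<and> (\<forall>j\<in>set js. 1 \<le> j \<and> j < n) \<and> \<sigma> = word_prod js)"

text \<open>D_{nu_f}: t^{nu_f} d row standard, first column of first component increasing.
  Rows of the first component: (2r-1, 2r), r = 1..f; second component: 2f+1, ..., n.\<close>
definition Dnu :: "nat \<Rightarrow> nat \<Rightarrow> (nat \<Rightarrow> nat) set" where
  "Dnu n f = {d \<in> Sym n.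
      (\<forall>r\<in>{1..f}. d (2*r - 1) < d (2*r)) \<and>
      (\<forall>r. 1 \<le> r \<and> r < f \<longrightarrow> d (2*r - 1) < d (2*r + 1)) \<and>
      (\<forall>a. 2*f + 1 \<le> a \<and> a < n \<longrightarrow> d a < d (Suc a))}"

definition Df :: "nat \<Rightarrow> nat \<Rightarrow> (nat \<Rightarrow> nat) set" where
  "Df n f = Dnu n f \<inter> Sym (2*f)"

definition d0 :: "nat \<Rightarrow> nat \<Rightarrow> nat" where
  "d0 f a = (if 1 \<le> a \<and> a \<le> 2*f then
               (if odd a then (a + 1) div 2 else 2*f + 1 - a div 2)
             else a)"

definition Pf :: "nat \<Rightarrow> nat \<Rightarrow> nat list set" where
  "Pf n f = {J. length J = 2*f \<and> sorted_wrt (<) J \<and> set J \<subseteq> {1..n}}"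

text \<open>d_J: the unique d in D_{nu_f} whose first component tableau has the entries of J
  in increasing order along successive rows, i.e. (a)d = J_a for a = 1..2f.\<close>
definition dJ :: "nat \<Rightarrow> nat \<Rightarrow> nat list \<Rightarrow> nat \<Rightarrow> nat" where
  "dJ n f J = (THE d. d \<in> Dnu n f \<and> (\<forall>a\<in>{1..2*f}. d a = J ! (a - 1)))"

definition J0 :: "nat \<Rightarrow> nat \<Rightarrow> nat list" where
  "J0 n f = [n - 2*f + 1 ..< n + 1]"

end

theory Submission
  imports Defs
begin

text \<open>The Coxeter length of a permutation is its number of inversions. If the inversion set
  of \<open>u\<close> is contained in that of \<open>v\<close>, then \<open>v = (v \<circ> inv u) \<circ> u\<close> and the inversions of
  \<open>v \<circ> inv u\<close> are the images under \<open>u\<close> of the inversions of \<open>v\<close> that are not inversions of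
  \<open>u\<close>, so the lengths add up; moreover, if \<open>u \<noteq> v\<close>, a descent of \<open>v \<circ> inv u\<close> yields a simple
  transposition that lengthens \<open>u\<close> by one while staying below \<open>v\<close>.

  Row standardness and the increasing first column say exactly that \<open>d \<in> D\<^sub>\<nu>\<close> inverts
  only pairs from a fixed set \<open>A\<close> (\<open>allowed_inversions\<close> below), and \<open>d\<^sub>0 d\<^sub>J\<^sub>0\<close> inverts
  precisely \<open>A\<close>: it is the top of \<open>D\<^sub>\<nu>\<close>, which gives (3). Likewise \<open>d\<^sub>0\<close> inverts every
  pair of \<open>A\<close> inside the first component, which contains all inversions of \<open>d \<in> D\<^sub>f\<close>, and
  \<open>d\<^sub>J\<^sub>0\<close> inverts every pair crossing between the components, which contains all inversions
  of \<open>d\<^sub>J\<close>; this gives (1) and (2).\<close>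

definition inversions :: "nat \<Rightarrow> (nat \<Rightarrow> nat) \<Rightarrow> (nat \<times> nat) set" where
  "inversions n \<sigma> = {(a, b). 1 \<le> a \<and> a < b \<and> b \<le> n \<and> \<sigma> b < \<sigma> a}"

lemma finite_inversions [simp]: "finite (inversions n \<sigma>)"
  by (rule finite_subset[of _ "{1..n} \<times> {1..n}"]) (auto simp: inversions_def)

lemma inversions_id [simp]: "inversions n id = {}"
  by (auto simp: inversions_def)

lemma not_inversion_imp_less:
  assumes "\<sigma> permutes {1..n}" "1 \<le> a" "a < b" "b \<le> n" "(a, b) \<notin> inversions n \<sigma>"
  shows "\<sigma> a < \<sigma> b"
proof -
  have "\<sigma> a \<noteq> \<sigma> b"
    using permutes_inj[OF assms(1)] \<open>a < b\<close> by (metis injD less_irrefl)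
  then show ?thesis using assms by (auto simp: inversions_def)
qed

lemma sj_apply: "sj j x = (if x = j then Suc j else if x = Suc j then j else x)"
  unfolding sj_def transpose_def by auto

lemma sj_sj [simp]: "sj j (sj j x) = x"
  by (simp add: sj_apply)

lemma sj_permutes: "1 \<le> j \<Longrightarrow> j < n \<Longrightarrow> sj j permutes {1..n}"
  unfolding sj_def by (rule permutes_swap_id) auto

lemma inversions_comp_sj:
  assumes "1 \<le> j" "j < n"
  shows "inversions n (\<sigma> \<circ> sj j) - {(j, Suc j)}
       = map_prod (sj j) (sj j) ` (inversions n \<sigma> - {(j, Suc j)})"
proof -
  have swap: "1 \<le> sj j a \<and> sj j a < sj j b \<and> sj j b \<le> n \<and> (sj j a, sj j b) \<noteq> (j, Suc j)"
    if "1 \<le> a" "a < b" "b \<le> n" "(a, b) \<noteq> (j, Suc j)" for a b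
    using that assms by (auto simp: sj_apply)
  show ?thesis
  proof (intro set_eqI iffI)
    fix z assume z: "z \<in> inversions n (\<sigma> \<circ> sj j) - {(j, Suc j)}"
    obtain a b where ab: "z = (a, b)"
      by (cases z)
    have "(sj j a, sj j b) \<in> inversions n \<sigma> - {(j, Suc j)}"
      using z swap[of a b] unfolding ab inversions_def by auto
    moreover have "z = map_prod (sj j) (sj j) (sj j a, sj j b)"
      by (simp add: ab)
    ultimately show "z \<in> map_prod (sj j) (sj j) ` (inversions n \<sigma> - {(j, Suc j)})"
      by blast
  next
    fix z assume "z \<in> map_prod (sj j) (sj j) ` (inversions n \<sigma> - {(j, Suc j)})"
    then obtain a b where "z = (sj j a, sj j b)" "(a, b) \<in> inversions n \<sigma> - {(j, Suc j)}"
      by auto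
    then show "z \<in> inversions n (\<sigma> \<circ> sj j) - {(j, Suc j)}"
      using swap[of a b] unfolding inversions_def by auto
  qed
qed

lemma card_inversions_comp_sj:
  assumes "1 \<le> j" "j < n"
  shows "card (inversions n (\<sigma> \<circ> sj j)) + of_bool (\<sigma> (Suc j) < \<sigma> j)
       = card (inversions n \<sigma>) + of_bool (\<sigma> j < \<sigma> (Suc j))"
proof -
  have mem: "(j, Suc j) \<in> inversions n \<sigma> \<longleftrightarrow> \<sigma> (Suc j) < \<sigma> j"
    "(j, Suc j) \<in> inversions n (\<sigma> \<circ> sj j) \<longleftrightarrow> \<sigma> j < \<sigma> (Suc j)"
    using assms by (auto simp: inversions_def sj_apply)
  have "inj (map_prod (sj j) (sj j))"
    by (rule prod.inj_map) (simp_all add: sj_def inj_transpose)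
  then have "card (inversions n (\<sigma> \<circ> sj j) - {(j, Suc j)}) = card (inversions n \<sigma> - {(j, Suc j)})"
    unfolding inversions_comp_sj[OF assms] by (simp add: card_image inj_on_subset)
  then show ?thesis
    using mem card_Suc_Diff1[of "inversions n \<sigma>"] card_Suc_Diff1[of "inversions n (\<sigma> \<circ> sj j)"]
    by (simp add: card_Diff_singleton_if split: if_splits)
qed

lemma word_prod_Nil [simp]: "word_prod [] = id"
  by (simp add: word_prod_def)

lemma word_prod_Cons [simp]: "word_prod (j # js) = word_prod js \<circ> sj j"
  by (simp add: word_prod_def pmult_def)

lemma card_inversions_word_prod_le:
  "\<forall>j\<in>set js. 1 \<le> j \<and> j < n \<Longrightarrow> card (inversions n (word_prod js)) \<le> length js"
proof (induction js)
  case Nil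
  show ?case by (simp only: word_prod_Nil inversions_id) simp
next
  case (Cons j js)
  then have "card (inversions n (word_prod js \<circ> sj j)) \<le> card (inversions n (word_prod js)) + 1"
    using card_inversions_comp_sj[of j n "word_prod js"] by (cases "word_prod js j < word_prod js (Suc j)") auto
  moreover have "card (inversions n (word_prod js)) \<le> length js"
    using Cons by simp
  ultimately show ?case
    unfolding word_prod_Cons length_Cons by linarith
qed

lemma exists_descent:
  fixes g :: "nat \<Rightarrow> 'a::linorder"
  assumes "i < k" "g k < g i"
  shows "\<exists>j. i \<le> j \<and> j < k \<and> g (Suc j) < g j"
proof (rule ccontr)
  assume no_descent: "\<nexists>j. i \<le> j \<and> j < k \<and> g (Suc j) < g j"
  have "g i \<le> g m" if "i \<le> m" "m \<le> k" for m
    using that by (induction m rule: dec_induct) (use no_descent in \<open>auto intro: order_trans simp: not_less\<close>)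
  from this[of k] \<open>i < k\<close> \<open>g k < g i\<close> show False by simp
qed

lemma strict_mono_on_eq_if_image_eq:
  fixes u v :: "nat \<Rightarrow> 'a::linorder"
  assumes "strict_mono_on {p..q} u" "strict_mono_on {p..q} v" "u ` {p..q} = v ` {p..q}"
    and "x \<in> {p..q}"
  shows "u x = v x"
proof -
  have sorted: "sorted_wrt (<) (map g [p..<Suc q])" if "strict_mono_on {p..q} g" for g :: "nat \<Rightarrow> 'a"
    unfolding sorted_wrt_map
    by (rule sorted_wrt_mono_rel[OF _ sorted_wrt_upt]) (use that in \<open>auto simp: strict_mono_on_def\<close>)
  have "map u [p..<Suc q] = map v [p..<Suc q]"
    by (rule strict_sorted_equal[OF sorted[OF assms(2)] sorted[OF assms(1)]])
      (simp only: set_map set_upt atLeastLessThanSuc_atLeastAtMost assms(3))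
  then show ?thesis
    using assms(4) by (cases "x = q") auto
qed

lemma strict_mono_on_atLeastAtMost_Suc:
  fixes g :: "nat \<Rightarrow> 'a::order"
  assumes "\<And>x. p \<le> x \<Longrightarrow> x < q \<Longrightarrow> g x < g (Suc x)"
  shows "strict_mono_on {p..q} g"
proof (rule strict_mono_onI)
  fix x y assume "x \<in> {p..q}" "y \<in> {p..q}" "x < y"
  then have "Suc x \<le> y" "y \<le> q" "p \<le> x"
    by auto
  then show "g x < g y"
    by (induction y rule: dec_induct) (use assms in \<open>auto intro: order.strict_trans\<close>)
qed

lemma inversions_empty_imp_id:
  assumes perm: "\<sigma> permutes {1..n}" and "inversions n \<sigma> = {}"
  shows "\<sigma> = id"
proof
  fix x
  have "strict_mono_on {1..n} \<sigma>"
    using not_inversion_imp_less[OF perm] assms(2) by (intro strict_mono_onI) auto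
  then have "x \<in> {1..n} \<Longrightarrow> \<sigma> x = id x"
    using strict_mono_on_eq_if_image_eq[of 1 n \<sigma> id] strict_mono_on_id permutes_image[OF perm]
    by auto
  then show "\<sigma> x = id x"
    using permutes_not_in[OF perm] by fastforce
qed

lemma exists_descent_if_not_id:
  assumes perm: "\<sigma> permutes {1..n}" and "\<sigma> \<noteq> id"
  shows "\<exists>j. 1 \<le> j \<and> j < n \<and> \<sigma> (Suc j) < \<sigma> j"
proof -
  obtain a b where "1 \<le> a" "a < b" "b \<le> n" "\<sigma> b < \<sigma> a"
    using inversions_empty_imp_id[OF perm] assms(2) by (fastforce simp: inversions_def)
  then show ?thesis
    using exists_descent[of a b \<sigma>] by (metis le_trans less_le_trans)
qed

lemma exists_word_of_card_inversions:
  "\<sigma> permutes {1..n} \<Longrightarrow>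
     \<exists>js. (\<forall>j\<in>set js. 1 \<le> j \<and> j < n) \<and> length js = card (inversions n \<sigma>) \<and> \<sigma> = word_prod js"
proof (induction "card (inversions n \<sigma>)" arbitrary: \<sigma> rule: less_induct)
  case less
  show ?case
  proof (cases "\<sigma> = id")
    case True
    then show ?thesis by (intro exI[of _ "[]"]) simp
  next
    case False
    then obtain j where j: "1 \<le> j" "j < n" "\<sigma> (Suc j) < \<sigma> j"
      using exists_descent_if_not_id less.prems by blast
    then have shorter: "card (inversions n (\<sigma> \<circ> sj j)) + 1 = card (inversions n \<sigma>)"
      using card_inversions_comp_sj[OF j(1,2), of \<sigma>] by simp
    have "\<sigma> \<circ> sj j permutes {1..n}"
      using less.prems sj_permutes[OF j(1,2)] by (rule permutes_compose[rotated])
    then obtain js where "\<forall>i\<in>set js. 1 \<le> i \<and> i < n"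
        "length js = card (inversions n (\<sigma> \<circ> sj j))" "\<sigma> \<circ> sj j = word_prod js"
      using less.hyps[of "\<sigma> \<circ> sj j"] shorter by auto
    moreover have "\<sigma> = \<sigma> \<circ> sj j \<circ> sj j"
      by (simp add: fun_eq_iff)
    ultimately show ?thesis
      using j shorter by (intro exI[of _ "j # js"]) auto
  qed
qed

lemma clen_eq_card_inversions:
  assumes "\<sigma> permutes {1..n}"
  shows "clen n \<sigma> = card (inversions n \<sigma>)"
  unfolding clen_def
proof (rule Least_equality)
  show "\<exists>js. length js = card (inversions n \<sigma>) \<and> (\<forall>j\<in>set js. 1 \<le> j \<and> j < n) \<and> \<sigma> = word_prod js"
    using exists_word_of_card_inversions[OF assms] by blast
qed (use card_inversions_word_prod_le in blast)

lemma permutes_comp_inv_eq_id_iff: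
  assumes "u permutes S"
  shows "v \<circ> inv u = id \<longleftrightarrow> v = u"
proof
  assume "v \<circ> inv u = id"
  then have "v \<circ> inv u \<circ> u = u"
    by simp
  then show "v = u"
    using permutes_inv_o(2)[OF assms] by (simp add: comp_assoc)
qed (use permutes_inv_o(1)[OF assms] in simp)

lemma inversions_comp_inv:
  assumes pu: "u permutes {1..n}" and pv: "v permutes {1..n}"
    and sub: "inversions n u \<subseteq> inversions n v"
  shows "inversions n (v \<circ> inv u) = map_prod u u ` (inversions n v - inversions n u)"
proof (intro set_eqI iffI)
  fix z assume "z \<in> inversions n (v \<circ> inv u)"
  then obtain i k where z: "z = (i, k)" "1 \<le> i" "i < k" "k \<le> n" "v (inv u k) < v (inv u i)"
    by (auto simp: inversions_def)
  define a b where "a = inv u i" and "b = inv u k"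
  have ab: "a \<in> {1..n}" "b \<in> {1..n}" "u a = i" "u b = k" "v b < v a"
    using z permutes_inv[OF pu] permutes_inverses(1)[OF pu] unfolding a_def b_def
    by (auto dest: permutes_in_image)
  have "a < b"
  proof (rule ccontr)
    assume "\<not> a < b"
    moreover have "a \<noteq> b"
      using ab z by auto
    ultimately have "(b, a) \<in> inversions n u"
      using ab z by (auto simp: inversions_def)
    then show False
      using sub ab(5) by (auto simp: inversions_def)
  qed
  then have "(a, b) \<in> inversions n v - inversions n u"
    using ab z by (auto simp: inversions_def)
  then show "z \<in> map_prod u u ` (inversions n v - inversions n u)"
    using ab z by force
next
  fix z assume "z \<in> map_prod u u ` (inversions n v - inversions n u)"
  then obtain a b where z: "z = (u a, u b)" and ab: "(a, b) \<in> inversions n v" "(a, b) \<notin> inversions n u"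
    by auto
  have range: "1 \<le> a" "a < b" "b \<le> n" "v b < v a"
    using ab by (auto simp: inversions_def)
  then have "u a \<in> {1..n}" "u b \<in> {1..n}"
    using permutes_in_image[OF pu] by auto
  then show "z \<in> inversions n (v \<circ> inv u)"
    using not_inversion_imp_less[OF pu range(1-3) ab(2)] range(4) permutes_inverses(2)[OF pu]
    unfolding z by (auto simp: inversions_def)
qed

lemma card_inversions_comp_inv:
  assumes "u permutes {1..n}" "v permutes {1..n}" "inversions n u \<subseteq> inversions n v"
  shows "card (inversions n v) = card (inversions n u) + card (inversions n (v \<circ> inv u))"
proof -
  have "inj (map_prod u u)"
    using permutes_inj[OF assms(1)] permutes_inj[OF assms(1)] by (rule prod.inj_map)
  then have "card (inversions n (v \<circ> inv u)) = card (inversions n v - inversions n u)"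
    unfolding inversions_comp_inv[OF assms] by (simp add: card_image inj_on_subset)
  then show ?thesis
    using assms(3) by (simp add: card_Diff_subset card_mono)
qed

lemma length_additive_factor:
  assumes "u \<in> Sym n" "v \<in> Sym n" "inversions n u \<subseteq> inversions n v"
  shows "\<exists>w\<in>Sym n. v = pmult u w \<and> clen n v = clen n u + clen n w"
proof
  have pu: "u permutes {1..n}" and pv: "v permutes {1..n}"
    using assms(1,2) by (auto simp: Sym_def)
  then show pw: "v \<circ> inv u \<in> Sym n"
    unfolding Sym_def by (blast intro: permutes_compose permutes_inv)
  have "v = pmult u (v \<circ> inv u)"
    using permutes_inv_o(2)[OF pu] by (simp add: pmult_def comp_assoc)
  then show "v = pmult u (v \<circ> inv u) \<and> clen n v = clen n u + clen n (v \<circ> inv u)"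
    using card_inversions_comp_inv[OF pu pv assms(3)] pu pv pw
    by (simp add: clen_eq_card_inversions Sym_def)
qed

lemma inversions_sj_comp:
  assumes "u permutes {1..n}" "1 \<le> a" "a < b" "b \<le> n" "u a = j" "u b = Suc j"
  shows "inversions n (sj j \<circ> u) = insert (a, b) (inversions n u)"
proof (rule set_eqI)
  fix z :: "nat \<times> nat"
  obtain x y where z: "z = (x, y)"
    by (cases z)
  have "x \<noteq> a \<Longrightarrow> u x \<noteq> j" "y \<noteq> a \<Longrightarrow> u y \<noteq> j" "x \<noteq> b \<Longrightarrow> u x \<noteq> Suc j" "y \<noteq> b \<Longrightarrow> u y \<noteq> Suc j"
    using permutes_inj[OF assms(1)] assms(5,6) by (metis injD)+
  then show "z \<in> inversions n (sj j \<circ> u) \<longleftrightarrow> z \<in> insert (a, b) (inversions n u)"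
    unfolding z inversions_def using assms(2-6) by (auto simp: sj_apply split: if_splits) (metis less_asym)
qed

lemma exists_ascent_below:
  assumes pu: "u permutes {1..n}" and pv: "v permutes {1..n}"
    and sub: "inversions n u \<subseteq> inversions n v" and "u \<noteq> v"
  shows "\<exists>j. 1 \<le> j \<and> j < n \<and> inversions n (pmult u (sj j)) \<subseteq> inversions n v
           \<and> clen n (pmult u (sj j)) = clen n u + 1"
proof -
  have "v \<circ> inv u permutes {1..n}"
    using permutes_inv[OF pu] pv by (rule permutes_compose)
  moreover have "v \<circ> inv u \<noteq> id"
    using \<open>u \<noteq> v\<close> permutes_comp_inv_eq_id_iff[OF pu] by simp
  \<comment> \<open>a descent of \<open>v \<circ> inv u\<close> at \<open>j\<close> is an inversion of \<open>v\<close> but not of \<open>u\<close> between the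
    positions of the values \<open>j\<close> and \<open>Suc j\<close>; swapping these values adds exactly this inversion\<close>
  ultimately obtain j where j: "1 \<le> j" "j < n" "(v \<circ> inv u) (Suc j) < (v \<circ> inv u) j"
    using exists_descent_if_not_id by blast
  then have "(j, Suc j) \<in> map_prod u u ` (inversions n v - inversions n u)"
    unfolding inversions_comp_inv[OF pu pv sub, symmetric] by (auto simp: inversions_def)
  then obtain a b where ab: "(a, b) \<in> inversions n v" "(a, b) \<notin> inversions n u" "u a = j" "u b = Suc j"
    by auto
  moreover have "1 \<le> a" "a < b" "b \<le> n"
    using ab(1) by (auto simp: inversions_def)
  ultimately have new: "inversions n (sj j \<circ> u) = insert (a, b) (inversions n u)"
    using inversions_sj_comp[OF pu] by blast
  have "sj j \<circ> u permutes {1..n}"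
    using pu sj_permutes[OF j(1,2)] by (rule permutes_compose)
  then have "clen n (sj j \<circ> u) = clen n u + 1"
    using new ab(2) pu by (simp add: clen_eq_card_inversions)
  moreover have "inversions n (sj j \<circ> u) \<subseteq> inversions n v"
    unfolding new using sub ab(1) by simp
  ultimately show ?thesis
    using j by (intro exI[of _ j]) (simp add: pmult_def)
qed

text \<open>Positions \<open>1..2*f\<close> form the first component, row \<open>r\<close> holding \<open>2*r - 1\<close> and \<open>2*r\<close>; so
  odd positions make up its first column.\<close>

definition allowed_inversions :: "nat \<Rightarrow> nat \<Rightarrow> (nat \<times> nat) set" where
  "allowed_inversions n f =
     {(a, b). 1 \<le> a \<and> a \<le> 2*f \<and> a < b \<and> b \<le> n \<and> (b \<le> 2*f \<longrightarrow> even a)}"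

lemma Dnu_permutes: "d \<in> Dnu n f \<Longrightarrow> d permutes {1..n}"
  by (simp add: Dnu_def Sym_def)

lemma Dnu_row_less:
  assumes "d \<in> Dnu n f" "odd a" "a < 2*f"
  shows "d a < d (Suc a)"
proof -
  obtain r where r: "a = 2*r + 1"
    using \<open>odd a\<close> by (rule oddE)
  moreover have "Suc r \<in> {1..f}"
    using assms(3) r by auto
  ultimately have "d (2 * Suc r - 1) < d (2 * Suc r)"
    using assms(1) unfolding Dnu_def by blast
  then show ?thesis
    using r by simp
qed

lemma Dnu_column_less:
  assumes "d \<in> Dnu n f" "odd a" "a + 2 < 2*f"
  shows "d a < d (a + 2)"
proof -
  obtain r where r: "a = 2*r + 1"
    using \<open>odd a\<close> by (rule oddE)
  moreover have "1 \<le> Suc r \<and> Suc r < f"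
    using assms(3) r by auto
  ultimately have "d (2 * Suc r - 1) < d (2 * Suc r + 1)"
    using assms(1) unfolding Dnu_def by blast
  then show ?thesis
    using r by simp
qed

lemma Dnu_first_column_less:
  assumes "d \<in> Dnu n f" "odd a"
  shows "a < b \<Longrightarrow> b \<le> 2*f \<Longrightarrow> d a < d b"
proof (induction b rule: less_induct)
  case (less b)
  obtain c where c: "odd c" "a \<le> c" "c < b" "d c < d b"
  proof (cases "even b")
    case True
    then have "odd (b - 1)" "a \<le> b - 1" "Suc (b - 1) = b"
      using less.prems \<open>odd a\<close> by presburger+
    then show ?thesis
      using that[of "b - 1"] Dnu_row_less[OF assms(1), of "b - 1"] less.prems by simp
  next
    case False
    then have "odd (b - 2)" "a \<le> b - 2" "b - 2 + 2 = b" "b < 2*f"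
      using less.prems \<open>odd a\<close> by presburger+
    then show ?thesis
      using that[of "b - 2"] Dnu_column_less[OF assms(1), of "b - 2"] by simp
  qed
  show ?case
  proof (cases "c = a")
    case False
    then show ?thesis
      using less.IH[of c] c less.prems by auto
  qed (use c in simp)
qed

lemma Dnu_tail_strict_mono: "d \<in> Dnu n f \<Longrightarrow> strict_mono_on {2*f+1..n} d"
  by (rule strict_mono_on_atLeastAtMost_Suc) (auto simp: Dnu_def)

lemma Dnu_iff_inversions:
  assumes "2*f \<le> n"
  shows "d \<in> Dnu n f \<longleftrightarrow> d permutes {1..n} \<and> inversions n d \<subseteq> allowed_inversions n f"
proof
  assume d: "d \<in> Dnu n f"
  have "(a, b) \<in> allowed_inversions n f" if "(a, b) \<in> inversions n d" for a b
  proof -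
    have ab: "1 \<le> a" "a < b" "b \<le> n" "d b < d a"
      using that by (auto simp: inversions_def)
    have "a \<le> 2*f"
      using strict_mono_onD[OF Dnu_tail_strict_mono[OF d], of a b] ab by force
    moreover have "even a" if "b \<le> 2*f"
      using Dnu_first_column_less[OF d, of a b] ab that by force
    ultimately show ?thesis
      using ab by (auto simp: allowed_inversions_def)
  qed
  then show "d permutes {1..n} \<and> inversions n d \<subseteq> allowed_inversions n f"
    using Dnu_permutes[OF d] by auto
next
  assume "d permutes {1..n} \<and> inversions n d \<subseteq> allowed_inversions n f"
  then have perm: "d permutes {1..n}" and sub: "inversions n d \<subseteq> allowed_inversions n f"
    by auto
  have less: "d x < d y" if "1 \<le> x" "x < y" "y \<le> n" "(x, y) \<notin> allowed_inversions n f" for x y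
    using not_inversion_imp_less[OF perm that(1-3)] sub that(4) by blast
  show "d \<in> Dnu n f"
    unfolding Dnu_def Sym_def
    using perm assms
    by (auto intro!: less simp: allowed_inversions_def)
qed

lemma d0_less_iff:
  assumes "1 \<le> a" "a < b" "b \<le> 2*f"
  shows "d0 f b < d0 f a \<longleftrightarrow> even a"
  using assms by (cases "even a"; cases "even b") (auto simp: d0_def elim!: evenE oddE)

lemma d0_permutes: "d0 f permutes {1..2*f}"
proof (rule bij_imp_permutes)
  have "inj_on (d0 f) {1..2*f}"
    by (auto simp: inj_on_def d0_def elim!: evenE oddE)
  moreover have "d0 f ` {1..2*f} \<subseteq> {1..2*f}"
    by (auto simp: d0_def elim!: evenE)
  ultimately show "bij_betw (d0 f) {1..2*f} {1..2*f}"
    by (simp add: bij_betw_def endo_inj_surj)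
qed (auto simp: d0_def)

lemma d0_in_Sym: "2*f \<le> n \<Longrightarrow> d0 f \<in> Sym n"
  unfolding Sym_def by (auto intro: permutes_subset[OF d0_permutes])

lemma inversions_subset_crossing:
  assumes "strict_mono_on {1..m} d" "strict_mono_on {m+1..n} d"
  shows "inversions n d \<subseteq> {1..m} \<times> {m+1..n}"
proof
  fix z assume "z \<in> inversions n d"
  then obtain a b where z: "z = (a, b)" "1 \<le> a" "a < b" "b \<le> n" "d b < d a"
    by (auto simp: inversions_def)
  have "\<not> b \<le> m" "\<not> m < a"
    using strict_mono_onD[OF assms(1), of a b] strict_mono_onD[OF assms(2), of a b] z by auto
  then show "z \<in> {1..m} \<times> {m+1..n}"
    using z by auto
qed

lemma dJ_exists:
  assumes fn: "2*f \<le> n" and J: "J \<in> Pf n f"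
  shows "\<exists>d\<in>Dnu n f. \<forall>a\<in>{1..2*f}. d a = J ! (a - 1)"
proof -
  have lJ: "length J = 2*f" and sJ: "sorted_wrt (<) J" and setJ: "set J \<subseteq> {1..n}"
    using J unfolding Pf_def by auto
  define S where "S = sorted_list_of_set ({1..n} - set J)"
  define L where "L = J @ S"
  have sS: "sorted_wrt (<) S"
    unfolding S_def by (rule strict_sorted_list_of_set)
  have "distinct J"
    using sJ strict_sorted_iff by blast
  then have dL: "distinct L" and setL: "set L = {1..n}" and lL: "length L = n"
    using setJ lJ fn distinct_card[of J] card_Diff_subset[OF finite_set setJ]
    by (auto simp: L_def S_def)
  define d where "d x = (if x \<in> {1..n} then L ! (x - 1) else x)" for x
  have "bij_betw (\<lambda>x. x - 1) {1..n} {..<n}"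
    by (rule bij_betw_byWitness[where f' = Suc]) auto
  then have "bij_betw ((!) L \<circ> (\<lambda>x. x - 1)) {1..n} {1..n}"
    using bij_betw_nth[OF dL _ setL[symmetric]] lL by (auto intro: bij_betw_trans)
  then have "bij_betw d {1..n} {1..n}"
    using bij_betw_cong[of "{1..n}" d "(!) L \<circ> (\<lambda>x. x - 1)"] by (simp add: d_def)
  then have perm: "d permutes {1..n}"
    by (rule bij_imp_permutes) (auto simp: d_def)
  have head: "d a = J ! (a - 1)" if "a \<in> {1..2*f}" for a
    using that fn lJ by (auto simp: d_def L_def nth_append)
  have tail: "d a = S ! (a - 1 - 2*f)" if "a \<in> {2*f+1..n}" for a
    using that lJ by (auto simp: d_def L_def nth_append)
  have "strict_mono_on {1..2*f} d"
    using sorted_wrt_nth_less[OF sJ] lJ by (intro strict_mono_onI) (auto simp: head)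
  moreover have "length S = n - 2*f"
    using lL lJ by (simp add: L_def)
  then have "strict_mono_on {2*f+1..n} d"
    using sorted_wrt_nth_less[OF sS] by (intro strict_mono_onI) (auto simp: tail)
  ultimately have "inversions n d \<subseteq> allowed_inversions n f"
    using inversions_subset_crossing[of "2*f" d n] by (auto simp: allowed_inversions_def)
  then have "d \<in> Dnu n f"
    using perm Dnu_iff_inversions[OF fn] by blast
  then show ?thesis
    using head by blast
qed

lemma Dnu_eq_if_head_eq:
  assumes fn: "2*f \<le> n" and d: "d \<in> Dnu n f" and d': "d' \<in> Dnu n f"
    and head: "\<forall>a\<in>{1..2*f}. d a = d' a"
  shows "d = d'"
proof
  fix x
  have tail_image: "g ` {2*f+1..n} = {1..n} - g ` {1..2*f}" if "g permutes {1..n}" for g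
  proof -
    have "{2*f+1..n} = {1..n} - {1..2*f}"
      by auto
    then show ?thesis
      using inj_on_image_set_diff[OF permutes_inj_on[OF that], of "{1..n}" "{1..2*f}"]
        permutes_image[OF that] fn by auto
  qed
  have "d ` {1..2*f} = d' ` {1..2*f}"
    using head by (intro image_cong) auto
  then have "d ` {2*f+1..n} = d' ` {2*f+1..n}"
    using tail_image[OF Dnu_permutes[OF d]] tail_image[OF Dnu_permutes[OF d']] by simp
  then have "x \<in> {2*f+1..n} \<Longrightarrow> d x = d' x"
    by (rule strict_mono_on_eq_if_image_eq[OF Dnu_tail_strict_mono[OF d] Dnu_tail_strict_mono[OF d']])
  then show "d x = d' x"
    using head permutes_not_in[OF Dnu_permutes[OF d]] permutes_not_in[OF Dnu_permutes[OF d']]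
    by (cases "x \<in> {1..n}") auto
qed

lemma dJ_spec:
  assumes "2*f \<le> n" "J \<in> Pf n f"
  shows "dJ n f J \<in> Dnu n f" "\<forall>a\<in>{1..2*f}. dJ n f J a = J ! (a - 1)"
proof -
  have "\<exists>!d. d \<in> Dnu n f \<and> (\<forall>a\<in>{1..2*f}. d a = J ! (a - 1))"
    using dJ_exists[OF assms] Dnu_eq_if_head_eq[OF assms(1)] by (metis (lifting))
  then have "dJ n f J \<in> Dnu n f \<and> (\<forall>a\<in>{1..2*f}. dJ n f J a = J ! (a - 1))"
    unfolding dJ_def by (rule theI')
  then show "dJ n f J \<in> Dnu n f" "\<forall>a\<in>{1..2*f}. dJ n f J a = J ! (a - 1)"
    by auto
qed

lemma J0_in_Pf: "2*f \<le> n \<Longrightarrow> J0 n f \<in> Pf n f"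
  unfolding J0_def Pf_def by (auto simp del: upt_Suc)

lemma dJ_J0_head:
  assumes "2*f \<le> n" "a \<in> {1..2*f}"
  shows "dJ n f (J0 n f) a = n - 2*f + a"
  using dJ_spec(2)[OF assms(1) J0_in_Pf[OF assms(1)]] assms
  by (auto simp: J0_def simp del: upt_Suc)

lemma dJ_J0_tail_le:
  assumes fn: "2*f \<le> n" and b: "b \<in> {2*f+1..n}"
  shows "dJ n f (J0 n f) b \<le> n - 2*f"
proof (rule ccontr)
  let ?v = "dJ n f (J0 n f)"
  have perm: "?v permutes {1..n}"
    using dJ_spec(1)[OF fn J0_in_Pf[OF fn]] by (rule Dnu_permutes)
  assume "\<not> ?v b \<le> n - 2*f"
  moreover have "?v b \<in> {1..n}"
    using b by (intro permutes_in_image[OF perm, THEN iffD2]) simp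
  ultimately have c: "?v b - (n - 2*f) \<in> {1..2*f}"
    by auto
  have "?v (?v b - (n - 2*f)) = n - 2*f + (?v b - (n - 2*f))"
    by (rule dJ_J0_head[OF fn c])
  also have "\<dots> = ?v b"
    using \<open>\<not> ?v b \<le> n - 2*f\<close> by simp
  finally have "?v b - (n - 2*f) = b"
    by (rule injD[OF permutes_inj[OF perm]])
  then show False
    using c b by auto
qed

lemma crossing_subset_inversions_dJ_J0:
  assumes "2*f \<le> n"
  shows "{1..2*f} \<times> {2*f+1..n} \<subseteq> inversions n (dJ n f (J0 n f))"
  using dJ_J0_head[OF assms] dJ_J0_tail_le[OF assms] by (fastforce simp: inversions_def)

lemma inversions_dJ_subset_crossing:
  assumes "2*f \<le> n" "J \<in> Pf n f"
  shows "inversions n (dJ n f J) \<subseteq> {1..2*f} \<times> {2*f+1..n}"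
proof (rule inversions_subset_crossing)
  have "length J = 2*f" "sorted_wrt (<) J"
    using assms(2) by (auto simp: Pf_def)
  then show "strict_mono_on {1..2*f} (dJ n f J)"
    using dJ_spec(2)[OF assms] sorted_wrt_nth_less[of "(<)" J]
    by (intro strict_mono_onI) auto
  show "strict_mono_on {2*f+1..n} (dJ n f J)"
    using dJ_spec(1)[OF assms] by (rule Dnu_tail_strict_mono)
qed

lemma pmult_d0_dJ_J0_head:
  assumes "2*f \<le> n" "a \<in> {1..2*f}"
  shows "pmult (d0 f) (dJ n f (J0 n f)) a = n - 2*f + d0 f a"
  using dJ_J0_head[OF assms(1)] permutes_in_image[OF d0_permutes[of f], of a] assms(2)
  by (simp add: pmult_def)

lemma pmult_d0_dJ_J0_tail: "2*f < b \<Longrightarrow> pmult (d0 f) (dJ n f (J0 n f)) b = dJ n f (J0 n f) b"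
  by (simp add: pmult_def d0_def)

lemma inversions_top:
  assumes fn: "2*f \<le> n"
  shows "inversions n (pmult (d0 f) (dJ n f (J0 n f))) = allowed_inversions n f"
proof -
  let ?v = "dJ n f (J0 n f)"
  note top_head = pmult_d0_dJ_J0_head[OF fn] and top_tail = pmult_d0_dJ_J0_tail[of f _ n]
  have tail_mono: "strict_mono_on {2*f+1..n} ?v"
    using dJ_spec(1)[OF fn J0_in_Pf[OF fn]] by (rule Dnu_tail_strict_mono)
  show ?thesis
  proof (intro set_eqI iffI)
    fix z assume "z \<in> inversions n (pmult (d0 f) ?v)"
    then obtain a b where z: "z = (a, b)" "1 \<le> a" "a < b" "b \<le> n"
      and inv: "pmult (d0 f) ?v b < pmult (d0 f) ?v a"
      by (auto simp: inversions_def)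
    have "a \<le> 2*f"
    proof (rule ccontr)
      assume "\<not> a \<le> 2*f"
      then have "?v a < ?v b"
        using strict_mono_onD[OF tail_mono, of a b] z by auto
      then show False
        using inv top_tail[of a] top_tail[of b] \<open>\<not> a \<le> 2*f\<close> z by auto
    qed
    moreover have "even a" if "b \<le> 2*f"
      using d0_less_iff[of a b f] inv z that top_head \<open>a \<le> 2*f\<close> by auto
    ultimately show "z \<in> allowed_inversions n f"
      using z by (auto simp: allowed_inversions_def)
  next
    fix z assume "z \<in> allowed_inversions n f"
    then obtain a b where z: "z = (a, b)" "1 \<le> a" "a \<le> 2*f" "a < b" "b \<le> n"
      and col: "b \<le> 2*f \<Longrightarrow> even a"
      by (auto simp: allowed_inversions_def)
    have "pmult (d0 f) ?v b < pmult (d0 f) ?v a"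
    proof (cases "b \<le> 2*f")
      case True
      then show ?thesis
        using d0_less_iff[of a b f] col z top_head by auto
    next
      case False
      then show ?thesis
        using dJ_J0_tail_le[OF fn, of b] top_head[of a] top_tail[of b] z
          permutes_in_image[OF d0_permutes[of f], of a] by auto
    qed
    then show "z \<in> inversions n (pmult (d0 f) ?v)"
      using z by (auto simp: inversions_def)
  qed
qed

lemma length_additive_d0:
  assumes fn: "2*f \<le> n" and d: "d \<in> Df n f"
  shows "\<exists>w\<in>Sym n. d0 f = pmult d w \<and> clen n (d0 f) = clen n d + clen n w"
proof (rule length_additive_factor)
  have dD: "d \<in> Dnu n f" and d2: "d permutes {1..2*f}"
    using d by (auto simp: Df_def Sym_def)
  then show "d \<in> Sym n"
    by (simp add: Dnu_def)
  show "d0 f \<in> Sym n"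
    using fn by (rule d0_in_Sym)
  show "inversions n d \<subseteq> inversions n (d0 f)"
  proof
    fix z assume z: "z \<in> inversions n d"
    then obtain a b where ab: "z = (a, b)" "1 \<le> a" "a < b" "b \<le> n" "d b < d a"
      by (auto simp: inversions_def)
    have "b \<le> 2*f"
    proof (rule ccontr)
      assume "\<not> b \<le> 2*f"
      moreover have "d a \<le> max a (2*f)"
        using permutes_in_image[OF d2, of a] permutes_not_in[OF d2, of a] by fastforce
      ultimately show False
        using ab permutes_not_in[OF d2, of b] by auto
    qed
    moreover have "z \<in> allowed_inversions n f"
      using z dD Dnu_iff_inversions[OF fn] by blast
    ultimately show "z \<in> inversions n (d0 f)"
      using d0_less_iff[of a b f] ab by (auto simp: allowed_inversions_def inversions_def)
  qed
qed

lemma length_additive_dJ_J0: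
  assumes fn: "2*f \<le> n" and J: "J \<in> Pf n f"
  shows "\<exists>w'\<in>Sym n. dJ n f (J0 n f) = pmult (dJ n f J) w'
           \<and> clen n (dJ n f (J0 n f)) = clen n (dJ n f J) + clen n w'"
proof (rule length_additive_factor)
  show "dJ n f J \<in> Sym n" "dJ n f (J0 n f) \<in> Sym n"
    using dJ_spec(1)[OF fn J] dJ_spec(1)[OF fn J0_in_Pf[OF fn]] by (simp_all add: Dnu_def)
  show "inversions n (dJ n f J) \<subseteq> inversions n (dJ n f (J0 n f))"
    using inversions_dJ_subset_crossing[OF fn J] crossing_subset_inversions_dJ_J0[OF fn] by blast
qed

lemma Dnu_exists_ascent:
  assumes fn: "2*f \<le> n" and d: "d \<in> Dnu n f" and ne: "d \<noteq> pmult (d0 f) (dJ n f (J0 n f))"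
  shows "\<exists>j. 1 \<le> j \<and> j \<le> n - 1 \<and> pmult d (sj j) \<in> Dnu n f
           \<and> clen n (pmult d (sj j)) = clen n d + 1"
proof -
  let ?m = "pmult (d0 f) (dJ n f (J0 n f))"
  have pm: "?m permutes {1..n}"
    using d0_in_Sym[OF fn] Dnu_permutes[OF dJ_spec(1)[OF fn J0_in_Pf[OF fn]]]
    unfolding pmult_def Sym_def by (blast intro: permutes_compose)
  have pd: "d permutes {1..n}" and sub: "inversions n d \<subseteq> inversions n ?m"
    using d inversions_top[OF fn] Dnu_iff_inversions[OF fn] by auto
  obtain j where j: "1 \<le> j" "j < n" "inversions n (pmult d (sj j)) \<subseteq> inversions n ?m"
      "clen n (pmult d (sj j)) = clen n d + 1"
    using exists_ascent_below[OF pd pm sub ne] by blast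
  moreover have "pmult d (sj j) permutes {1..n}"
    using pd sj_permutes[OF j(1,2)] by (simp add: pmult_def permutes_compose)
  ultimately have "pmult d (sj j) \<in> Dnu n f"
    using inversions_top[OF fn] Dnu_iff_inversions[OF fn] by auto
  then show ?thesis
    using j by (intro exI[of _ j]) auto
qed

theorem lemma5p11:
  fixes n f :: nat
  assumes "1 \<le> f" and "f \<le> n div 2"
  shows "(\<forall>d\<in>Df n f. \<exists>w\<in>Sym n. d0 f = pmult d w \<and> clen n (d0 f) = clen n d + clen n w)
       \<and> (\<forall>J\<in>Pf n f. \<exists>w'\<in>Sym n. dJ n f (J0 n f) = pmult (dJ n f J) w'
              \<and> clen n (dJ n f (J0 n f)) = clen n (dJ n f J) + clen n w')
       \<and> (\<forall>d\<in>Dnu n f. d \<noteq> pmult (d0 f) (dJ n f (J0 n f)) \<longrightarrow>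
              (\<exists>j. 1 \<le> j \<and> j \<le> n - 1 \<and> pmult d (sj j) \<in> Dnu n f
                   \<and> clen n (pmult d (sj j)) = clen n d + 1))"
proof -
  have "2*f \<le> n"
    using assms(2) by linarith
  then show ?thesis
    using length_additive_d0 length_additive_dJ_J0 Dnu_exists_ascent by blast
qed

end
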